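(* Let $\mu$ be a probability measure and let $P$ be a sub-Markov operator on $L^2(\mu)$, with adjoint $P^*$ on $L^2(\mu)$, such that $\mathrm{Ker}(1-P^*P)=\{0\}$. Then $$\|P\|_2:=\sup_{\mu(f^2)\le1}\mu\big((Pf)^2\big)^{1/2}<1$$ if and only if $$\|P\|_{tail}:=\lim_{R\to\infty}\sup_{\mu(f^2)\le1}\mu\Big(\big((|Pf|-R)^+\big)^2\Big)<1.$$
   Context: A sub-Markov operator on $L^2(\mu)$ is a linear contraction $P$ on $L^2(\mu)$ with $P1\le1$ and $Pf\ge0$ whenever $f\ge0$. *)

theory Defs
  imports "HOL-Probability.Probability"
begin

text \<open>Real L^2(M), represented by square-integrable measurable functions;
  operators act on representatives and must respect a.e. equality.\<close>

definition L2 :: "'a measure \<Rightarrow> ('a \<Rightarrow> real) set" where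
  "L2 M = {f. f \<in> borel_measurable M \<and> integrable M (\<lambda>x. (f x)\<^sup>2)}"

definition L2_operator :: "'a measure \<Rightarrow> (('a \<Rightarrow> real) \<Rightarrow> ('a \<Rightarrow> real)) \<Rightarrow> bool" where
  "L2_operator M P \<longleftrightarrow>
     (\<forall>f\<in>L2 M. P f \<in> L2 M) \<and>
     (\<forall>f\<in>L2 M. \<forall>g\<in>L2 M. (AE x in M. f x = g x) \<longrightarrow> (AE x in M. P f x = P g x)) \<and>
     (\<forall>f\<in>L2 M. \<forall>g\<in>L2 M. \<forall>a b::real.
        AE x in M. P (\<lambda>y. a * f y + b * g y) x = a * P f x + b * P g x)"

definition sub_markov :: "'a measure \<Rightarrow> (('a \<Rightarrow> real) \<Rightarrow> ('a \<Rightarrow> real)) \<Rightarrow> bool" where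
  "sub_markov M P \<longleftrightarrow>
     L2_operator M P \<and>
     (\<forall>f\<in>L2 M. (\<integral>x. (P f x)\<^sup>2 \<partial>M) \<le> (\<integral>x. (f x)\<^sup>2 \<partial>M)) \<and>
     (AE x in M. P (\<lambda>_. 1) x \<le> 1) \<and>
     (\<forall>f\<in>L2 M. (AE x in M. f x \<ge> 0) \<longrightarrow> (AE x in M. P f x \<ge> 0))"

definition is_adjoint :: "'a measure \<Rightarrow> (('a \<Rightarrow> real) \<Rightarrow> ('a \<Rightarrow> real))
    \<Rightarrow> (('a \<Rightarrow> real) \<Rightarrow> ('a \<Rightarrow> real)) \<Rightarrow> bool" where
  "is_adjoint M P Q \<longleftrightarrow>
     L2_operator M Q \<and>
     (\<forall>f\<in>L2 M. \<forall>g\<in>L2 M. (\<integral>x. P f x * g x \<partial>M) = (\<integral>x. f x * Q g x \<partial>M))"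

definition trivial_kernel_id_minus :: "'a measure \<Rightarrow> (('a \<Rightarrow> real) \<Rightarrow> ('a \<Rightarrow> real)) \<Rightarrow> bool" where
  "trivial_kernel_id_minus M T \<longleftrightarrow>
     (\<forall>f\<in>L2 M. (AE x in M. f x - T f x = 0) \<longrightarrow> (AE x in M. f x = 0))"

definition unit_ball_L2 :: "'a measure \<Rightarrow> ('a \<Rightarrow> real) set" where
  "unit_ball_L2 M = {f\<in>L2 M. (\<integral>x. (f x)\<^sup>2 \<partial>M) \<le> 1}"

definition op_norm2 :: "'a measure \<Rightarrow> (('a \<Rightarrow> real) \<Rightarrow> ('a \<Rightarrow> real)) \<Rightarrow> real" where
  "op_norm2 M P = (SUP f\<in>unit_ball_L2 M. sqrt (\<integral>x. (P f x)\<^sup>2 \<partial>M))"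

definition tail_norm :: "'a measure \<Rightarrow> (('a \<Rightarrow> real) \<Rightarrow> ('a \<Rightarrow> real)) \<Rightarrow> real" where
  "tail_norm M P = Lim at_top (\<lambda>R::real.
      SUP f\<in>unit_ball_L2 M. (\<integral>x. (max (\<bar>P f x\<bar> - R) 0)\<^sup>2 \<partial>M))"

end

theory Submission
  imports Defs
begin

text \<open>
  One direction is immediate: the tail quantity at level \<open>R = 0\<close> is already bounded by
  \<open>\<parallel>P\<parallel>\<^sub>2\<^sup>2\<close>. For the converse suppose \<open>\<parallel>P\<parallel>\<^sub>2 = 1\<close> while the tails at some level \<open>R\<close>
  are bounded by \<open>t < 1\<close> on the unit ball. Take \<open>f\<close> in the unit ball with \<open>\<mu>((Pf)\<^sup>2)\<close>
  close to 1; by positivity we may replace \<open>f\<close> by \<open>|f|\<close>, and splitting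
  \<open>(Pf)\<^sup>2 \<le> 2R|Pf| + ((|Pf| - R)\<^sup>+)\<^sup>2\<close> bounds \<open>\<mu>(Pf) = \<langle>f, P\<^sup>*1\<rangle>\<close> from below by
  \<open>(1 - t)/(4R)\<close>. Normalising \<open>\<langle>f, P\<^sup>*1\<rangle> = 1\<close> gives functions of bounded norm whose
  Dirichlet energy \<open>\<parallel>f\<parallel>\<^sup>2 - \<parallel>Pf\<parallel>\<^sup>2 = \<langle>(1 - P\<^sup>*P)f, f\<rangle>\<close> is arbitrarily small. Norm
  minimisers over the convex sets \<open>{\<langle>f, P\<^sup>*1\<rangle> \<ge> 1, energy \<le> \<epsilon>}\<close> converge in \<open>L\<^sup>2\<close>
  (parallelogram law and completeness) to some \<open>G\<close> with \<open>\<langle>G, P\<^sup>*1\<rangle> \<ge> 1\<close> and zero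
  energy. Cauchy--Schwarz for the energy form then gives \<open>G = P\<^sup>*PG\<close>, so \<open>G = 0\<close> by
  the kernel hypothesis, a contradiction.
\<close>

section \<open>Elementary real analysis\<close>

lemma quadratic_nonneg_imp_Cauchy_Schwarz:
  fixes a b c :: real
  assumes nonneg: "\<And>s. 0 \<le> a + 2 * s * b + s\<^sup>2 * c"
  shows "b\<^sup>2 \<le> a * c"
proof -
  have even: "0 \<le> a + s\<^sup>2 * c" for s
    using nonneg[of s] nonneg[of "-s"] by simp
  have "c \<ge> 0"
  proof (rule ccontr)
    assume "\<not> c \<ge> 0"
    then have "(sqrt ((\<bar>a\<bar> + 1) / - c))\<^sup>2 = (\<bar>a\<bar> + 1) / - c"
      by (intro real_sqrt_pow2) (simp add: divide_nonneg_neg)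
    then have "(sqrt ((\<bar>a\<bar> + 1) / - c))\<^sup>2 * c = - (\<bar>a\<bar> + 1)"
      using \<open>\<not> c \<ge> 0\<close> by simp
    then show False using even[of "sqrt ((\<bar>a\<bar> + 1) / - c)"] by simp
  qed
  show ?thesis
  proof (cases "c = 0")
    case True
    have "b = 0"
    proof (rule ccontr)
      assume "b \<noteq> 0"
      then have "a + 2 * (- (\<bar>a\<bar> + 1) / (2 * b)) * b + (- (\<bar>a\<bar> + 1) / (2 * b))\<^sup>2 * c
          = a - (\<bar>a\<bar> + 1)"
        using True by simp
      then show False
        using nonneg[of "- (\<bar>a\<bar> + 1) / (2 * b)"] abs_ge_self[of a] by linarith
    qed
    then show ?thesis using True by simp
  next
    case False
    have "0 \<le> a + 2 * (- b / c) * b + (- b / c)\<^sup>2 * c" by (rule nonneg)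
    also have "\<dots> = a - b\<^sup>2 / c" using False by (simp add: power2_eq_square field_simps)
    finally show ?thesis using \<open>c \<ge> 0\<close> False by (simp add: field_simps)
  qed
qed

lemma sq_le_linear_plus_tail:
  fixes y R :: real
  assumes "0 \<le> R"
  shows "y\<^sup>2 \<le> 2 * R * \<bar>y\<bar> + (max (\<bar>y\<bar> - R) 0)\<^sup>2"
proof (cases "\<bar>y\<bar> \<le> R")
  case True
  have "y\<^sup>2 = \<bar>y\<bar> * \<bar>y\<bar>"
    by (simp add: power2_eq_square)
  also have "\<dots> \<le> R * \<bar>y\<bar>"
    using True by (intro mult_right_mono) auto
  finally show ?thesis
    using assms mult_nonneg_nonneg[OF assms abs_ge_zero[of y]] zero_le_power2[of "max (\<bar>y\<bar> - R) 0"]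
    by linarith
next
  case False
  then show ?thesis by (simp add: power2_eq_square algebra_simps)
qed

lemma antimono_tendsto_Inf:
  fixes F :: "real \<Rightarrow> real"
  assumes antimono: "\<And>x y. 0 \<le> x \<Longrightarrow> x \<le> y \<Longrightarrow> F y \<le> F x"
    and bdd: "bdd_below (F ` {0..})"
  shows "(F \<longlongrightarrow> Inf (F ` {0..})) at_top"
proof (rule order_tendstoI)
  fix a assume a: "a < Inf (F ` {0..})"
  have lower: "Inf (F ` {0..}) \<le> F x" if "0 \<le> x" for x
    using bdd that by (intro cInf_lower) auto
  show "\<forall>\<^sub>F x in at_top. a < F x"
    using eventually_ge_at_top[of "0::real"] by (rule eventually_mono) (auto intro: less_le_trans[OF a lower])
next
  fix a assume "Inf (F ` {0..}) < a"
  then obtain y where y: "0 \<le> y" "F y < a"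
    using cInf_less_iff[OF _ bdd] by auto
  show "\<forall>\<^sub>F x in at_top. F x < a"
    using eventually_ge_at_top[of y] by (rule eventually_mono) (auto intro: le_less_trans[OF antimono[OF y(1)] y(2)])
qed

lemma Cauchy_of_null_bound:
  fixes d :: "nat \<Rightarrow> nat \<Rightarrow> real"
  assumes bound: "\<And>j k. j \<le> k \<Longrightarrow> d j k \<le> \<rho> j" and sym: "\<And>j k. d j k = d k j"
    and null: "\<rho> \<longlonglongrightarrow> 0" and e: "0 < e"
  shows "\<exists>N. \<forall>j\<ge>N. \<forall>k\<ge>N. d j k < e"
proof -
  obtain N where N: "\<And>n. N \<le> n \<Longrightarrow> \<rho> n < e"
    using order_tendstoD(2)[OF null e] by (auto simp: eventually_sequentially)
  have "d j k < e" if "N \<le> j" "N \<le> k" for j k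
  proof (cases "j \<le> k")
    case True
    then show ?thesis
      using bound[OF True] N[OF that(1)] by linarith
  next
    case False
    then show ?thesis
      using bound[of k j] N[OF that(2)] sym[of j k] by linarith
  qed
  then show ?thesis
    by blast
qed

section \<open>Square-integrable functions\<close>

lemma L2_borel_measurable: "f \<in> L2 M \<Longrightarrow> f \<in> borel_measurable M"
  and integrable_sq_L2: "f \<in> L2 M \<Longrightarrow> integrable M (\<lambda>x. (f x)\<^sup>2)"
  by (auto simp: L2_def)

lemma integrable_mult_L2:
  assumes "f \<in> L2 M" "g \<in> L2 M"
  shows "integrable M (\<lambda>x. f x * g x)"
proof (rule Bochner_Integration.integrable_bound)
  show "integrable M (\<lambda>x. (f x)\<^sup>2 + (g x)\<^sup>2)"
    using assms by (auto simp: L2_def)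
  have "2 * \<bar>f x * g x\<bar> \<le> (f x)\<^sup>2 + (g x)\<^sup>2" for x
    using sum_squares_bound[of "\<bar>f x\<bar>" "\<bar>g x\<bar>"] by (simp add: abs_mult power2_eq_square)
  then show "AE x in M. norm (f x * g x) \<le> norm ((f x)\<^sup>2 + (g x)\<^sup>2)"
    by (intro AE_I2) (smt (verit) real_norm_def zero_le_power2)
qed (use assms in \<open>auto simp: L2_def\<close>)

lemma L2_lincomb:
  assumes "f \<in> L2 M" "g \<in> L2 M"
  shows "(\<lambda>x. a * f x + b * g x) \<in> L2 M"
proof -
  have "(\<lambda>x. (a * f x + b * g x)\<^sup>2) = (\<lambda>x. a\<^sup>2 * (f x)\<^sup>2 + 2*a*b * (f x * g x) + b\<^sup>2 * (g x)\<^sup>2)"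
    by (auto simp: power2_eq_square algebra_simps)
  then show ?thesis
    using assms integrable_mult_L2[OF assms] by (auto simp: L2_def)
qed

lemma L2_diff: "f \<in> L2 M \<Longrightarrow> g \<in> L2 M \<Longrightarrow> (\<lambda>x. f x - g x) \<in> L2 M"
  using L2_lincomb[of f M g 1 "-1"] by simp

lemma L2_add: "f \<in> L2 M \<Longrightarrow> g \<in> L2 M \<Longrightarrow> (\<lambda>x. f x + g x) \<in> L2 M"
  using L2_lincomb[of f M g 1 1] by simp

lemma L2_scale: "f \<in> L2 M \<Longrightarrow> (\<lambda>x. a * f x) \<in> L2 M"
  using L2_lincomb[of f M f a 0] by simp

lemma L2_abs: "f \<in> L2 M \<Longrightarrow> (\<lambda>x. \<bar>f x\<bar>) \<in> L2 M"
  by (auto simp: L2_def)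

lemma (in finite_measure) L2_const: "(\<lambda>_. c) \<in> L2 M"
  by (auto simp: L2_def)

lemma (in finite_measure) integrable_L2: "f \<in> L2 M \<Longrightarrow> integrable M f"
  using integrable_mult_L2[OF _ L2_const, of f 1] by simp

context prob_space
begin

definition sq_norm :: "('a \<Rightarrow> real) \<Rightarrow> real"
  where "sq_norm f = (\<integral>x. (f x)\<^sup>2 \<partial>M)"

definition l2_inner :: "('a \<Rightarrow> real) \<Rightarrow> ('a \<Rightarrow> real) \<Rightarrow> real"
  where "l2_inner f g = (\<integral>x. f x * g x \<partial>M)"

lemma sq_norm_nonneg [simp]: "0 \<le> sq_norm f"
  by (simp add: sq_norm_def)

lemma l2_inner_commute: "l2_inner f g = l2_inner g f"
  by (simp add: l2_inner_def mult.commute)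

lemma sq_norm_diff_commute: "sq_norm (\<lambda>x. f x - g x) = sq_norm (\<lambda>x. g x - f x)"
  by (simp add: sq_norm_def power2_commute)

lemma sq_norm_scale: "sq_norm (\<lambda>x. a * f x) = a\<^sup>2 * sq_norm f"
  by (simp add: sq_norm_def power_mult_distrib)

lemma l2_inner_scale: "l2_inner (\<lambda>x. a * f x) g = a * l2_inner f g"
  by (simp add: l2_inner_def mult.assoc)

lemma sq_norm_lincomb:
  assumes "f \<in> L2 M" "g \<in> L2 M"
  shows "sq_norm (\<lambda>x. a * f x + b * g x) = a\<^sup>2 * sq_norm f + 2*a*b * l2_inner f g + b\<^sup>2 * sq_norm g"
proof -
  have "(\<lambda>x. (a * f x + b * g x)\<^sup>2) = (\<lambda>x. a\<^sup>2 * (f x)\<^sup>2 + 2*a*b * (f x * g x) + b\<^sup>2 * (g x)\<^sup>2)"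
    by (auto simp: power2_eq_square algebra_simps)
  then show ?thesis
    unfolding sq_norm_def l2_inner_def
    using assms integrable_mult_L2[OF assms] by (simp add: L2_def)
qed

lemma l2_inner_lincomb:
  assumes "f \<in> L2 M" "g \<in> L2 M" "h \<in> L2 M"
  shows "l2_inner (\<lambda>x. a * f x + b * g x) h = a * l2_inner f h + b * l2_inner g h"
proof -
  have "(\<lambda>x. (a * f x + b * g x) * h x) = (\<lambda>x. a * (f x * h x) + b * (g x * h x))"
    by (auto simp: algebra_simps)
  then show ?thesis
    unfolding l2_inner_def
    using integrable_mult_L2[OF assms(1,3)] integrable_mult_L2[OF assms(2,3)] by simp
qed

lemma l2_inner_sq_le:
  assumes "f \<in> L2 M" "g \<in> L2 M"
  shows "(l2_inner f g)\<^sup>2 \<le> sq_norm f * sq_norm g"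
proof (rule quadratic_nonneg_imp_Cauchy_Schwarz)
  fix s
  have "sq_norm (\<lambda>x. 1 * f x + s * g x) = sq_norm f + 2 * s * l2_inner f g + s\<^sup>2 * sq_norm g"
    using sq_norm_lincomb[OF assms, of 1 s] by simp
  then show "0 \<le> sq_norm f + 2 * s * l2_inner f g + s\<^sup>2 * sq_norm g"
    by (metis sq_norm_nonneg)
qed

lemma sq_norm_eq_0_AE:
  assumes "f \<in> L2 M" "sq_norm f = 0"
  shows "AE x in M. f x = 0"
proof -
  have "AE x in M. (f x)\<^sup>2 = 0"
    using assms integral_nonneg_eq_0_iff_AE[of M "\<lambda>x. (f x)\<^sup>2"] by (auto simp: L2_def sq_norm_def)
  then show ?thesis by simp
qed

lemma sq_norm_diff_le:
  assumes "f \<in> L2 M" "g \<in> L2 M" "h \<in> L2 M"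
  shows "sq_norm (\<lambda>x. f x - h x) \<le> 2 * sq_norm (\<lambda>x. f x - g x) + 2 * sq_norm (\<lambda>x. g x - h x)"
proof -
  have "(f x - h x)\<^sup>2 \<le> 2 * (f x - g x)\<^sup>2 + 2 * (g x - h x)\<^sup>2" for x
    using zero_le_power2[of "f x + h x - 2 * g x"] by (simp add: power2_eq_square algebra_simps)
  moreover have int: "integrable M (\<lambda>x. (f x - g x)\<^sup>2)" "integrable M (\<lambda>x. (g x - h x)\<^sup>2)"
    "integrable M (\<lambda>x. (f x - h x)\<^sup>2)"
    using assms by (simp_all add: L2_diff integrable_sq_L2)
  ultimately have "sq_norm (\<lambda>x. f x - h x) \<le> (\<integral>x. 2 * (f x - g x)\<^sup>2 + 2 * (g x - h x)\<^sup>2 \<partial>M)"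
    unfolding sq_norm_def by (intro integral_mono) auto
  also have "\<dots> = 2 * sq_norm (\<lambda>x. f x - g x) + 2 * sq_norm (\<lambda>x. g x - h x)"
    unfolding sq_norm_def using int by simp
  finally show ?thesis .
qed

lemma sq_norm_diff_parallelogram:
  assumes "f \<in> L2 M" "g \<in> L2 M"
  shows "sq_norm (\<lambda>x. f x - g x) = 2 * sq_norm f + 2 * sq_norm g - 4 * sq_norm (\<lambda>x. 1/2 * f x + 1/2 * g x)"
  using sq_norm_lincomb[OF assms, of 1 "-1"] sq_norm_lincomb[OF assms, of "1/2" "1/2"]
  by (simp add: power2_eq_square)

lemma AE_convergent_fast_Cauchy:
  assumes g: "\<And>i. g i \<in> L2 M"
    and fast: "\<And>i k. i \<le> k \<Longrightarrow> sq_norm (\<lambda>x. g k x - g i x) \<le> (1/4)^i"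
  shows "AE x in M. convergent (\<lambda>i. g i x)"
proof -
  define u where "u i x = g (Suc i) x - g i x" for i x
  have u: "u i \<in> L2 M" for i
    unfolding u_def using g by (intro L2_diff)
  have [measurable]: "u i \<in> borel_measurable M" for i
    using u by (rule L2_borel_measurable)
  have int_abs: "integrable M (\<lambda>x. \<bar>u i x\<bar>)" for i
    using integrable_L2[OF L2_abs[OF u]] .
  have mean_abs: "(\<integral>x. \<bar>u i x\<bar> \<partial>M) \<le> (1/2)^i" for i
  proof (rule power2_le_imp_le)
    have "(\<integral>x. \<bar>u i x\<bar> \<partial>M)\<^sup>2 = (l2_inner (\<lambda>x. \<bar>u i x\<bar>) (\<lambda>_. 1))\<^sup>2"
      by (simp add: l2_inner_def)
    also have "\<dots> \<le> sq_norm (\<lambda>x. \<bar>u i x\<bar>) * sq_norm (\<lambda>_. 1)"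
      using u by (intro l2_inner_sq_le L2_abs L2_const)
    also have "\<dots> \<le> (1/4)^i"
      using fast[of i "Suc i"] by (simp add: sq_norm_def u_def prob_space)
    finally show "(\<integral>x. \<bar>u i x\<bar> \<partial>M)\<^sup>2 \<le> ((1/2)^i)\<^sup>2"
      by (simp add: power_mult_distrib[symmetric] power_even_eq[symmetric] power2_eq_square)
  qed simp
  have "(\<integral>\<^sup>+x. (\<Sum>i. ennreal \<bar>u i x\<bar>) \<partial>M) = (\<Sum>i. ennreal (\<integral>x. \<bar>u i x\<bar> \<partial>M))"
    using int_abs by (subst nn_integral_suminf) (auto intro!: suminf_cong nn_integral_eq_integral)
  also have "\<dots> \<le> (\<Sum>i. ennreal ((1/2)^i))"
    using mean_abs by (intro suminf_le summableI) (auto intro: ennreal_leI)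
  also have "\<dots> < \<infinity>"
    by (subst suminf_ennreal2) auto
  finally have "AE x in M. (\<Sum>i. ennreal \<bar>u i x\<bar>) \<noteq> \<infinity>"
    by (intro nn_integral_PInf_AE) auto
  then show ?thesis
  proof (rule AE_mp, intro AE_I2 impI)
    fix x
    assume "(\<Sum>i. ennreal \<bar>u i x\<bar>) \<noteq> \<infinity>"
    then have "summable (\<lambda>i. \<bar>u i x\<bar>)"
      by (intro summable_suminf_not_top) auto
    then have "summable (\<lambda>i. u i x)"
      by (rule summable_rabs_cancel)
    then have "(\<lambda>m. g 0 x + (\<Sum>i<m. u i x)) \<longlonglongrightarrow> g 0 x + (\<Sum>i. u i x)"
      by (intro tendsto_add tendsto_const summable_LIMSEQ)
    moreover have "g 0 x + (\<Sum>i<m. u i x) = g m x" for m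
      unfolding u_def using sum_lessThan_telescope[of "\<lambda>i. g i x" m] by simp
    ultimately show "convergent (\<lambda>i. g i x)"
      unfolding convergent_def by auto
  qed
qed

lemma L2_limit_fast_Cauchy:
  assumes g: "\<And>i. g i \<in> L2 M"
    and fast: "\<And>i k. i \<le> k \<Longrightarrow> sq_norm (\<lambda>x. g k x - g i x) \<le> (1/4)^i"
  shows "\<exists>G\<in>L2 M. \<forall>i. sq_norm (\<lambda>x. G x - g i x) \<le> (1/4)^i"
proof -
  have [measurable]: "g i \<in> borel_measurable M" for i
    using g by (rule L2_borel_measurable)
  define G where "G x = lim (\<lambda>i. g i x)" for x
  have [measurable]: "G \<in> borel_measurable M"
    unfolding G_def by measurable
  have "AE x in M. convergent (\<lambda>i. g i x)"
    using g fast by (rule AE_convergent_fast_Cauchy)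
  then have lim: "AE x in M. (\<lambda>i. g i x) \<longlonglongrightarrow> G x"
    by eventually_elim (simp add: G_def convergent_LIMSEQ_iff)
  have close: "integrable M (\<lambda>x. (G x - g i x)\<^sup>2) \<and> sq_norm (\<lambda>x. G x - g i x) \<le> (1/4)^i" for i
  proof -
    have "(\<integral>\<^sup>+x. ennreal ((G x - g i x)\<^sup>2) \<partial>M) = (\<integral>\<^sup>+x. liminf (\<lambda>k. ennreal ((g k x - g i x)\<^sup>2)) \<partial>M)"
      using lim by (intro nn_integral_cong_AE, eventually_elim)
        (intro lim_imp_Liminf[symmetric] tendsto_intros, auto)
    also have "\<dots> \<le> liminf (\<lambda>k. (\<integral>\<^sup>+x. ennreal ((g k x - g i x)\<^sup>2) \<partial>M))"
      by (intro nn_integral_liminf) measurable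
    also have "\<dots> \<le> ennreal ((1/4)^i)"
    proof (intro Liminf_le trivial_limit_sequentially eventually_sequentiallyI)
      fix k assume "i \<le> k"
      have "(\<integral>\<^sup>+x. ennreal ((g k x - g i x)\<^sup>2) \<partial>M) = ennreal (sq_norm (\<lambda>x. g k x - g i x))"
        unfolding sq_norm_def using g by (intro nn_integral_eq_integral integrable_sq_L2 L2_diff) auto
      then show "(\<integral>\<^sup>+x. ennreal ((g k x - g i x)\<^sup>2) \<partial>M) \<le> ennreal ((1/4)^i)"
        using fast[OF \<open>i \<le> k\<close>] by (auto intro: ennreal_leI)
    qed
    finally have le: "(\<integral>\<^sup>+x. ennreal ((G x - g i x)\<^sup>2) \<partial>M) \<le> ennreal ((1/4)^i)" .
    then have int: "integrable M (\<lambda>x. (G x - g i x)\<^sup>2)"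
      by (intro integrableI_bounded) (auto simp: top_unique ennreal_less_top intro: le_less_trans)
    with le have "ennreal (sq_norm (\<lambda>x. G x - g i x)) \<le> ennreal ((1/4)^i)"
      unfolding sq_norm_def by (subst nn_integral_eq_integral[symmetric]) auto
    with int show ?thesis
      by (simp add: ennreal_le_iff)
  qed
  have "(\<lambda>x. G x - g 0 x) \<in> L2 M"
    using close[of 0] by (auto simp: L2_def)
  from L2_add[OF this g[of 0]] have "G \<in> L2 M"
    by simp
  with close show ?thesis
    by blast
qed

lemma L2_complete:
  assumes f: "\<And>k. f k \<in> L2 M"
    and Cauchy: "\<And>e. e > 0 \<Longrightarrow> \<exists>N. \<forall>j\<ge>N. \<forall>k\<ge>N. sq_norm (\<lambda>x. f j x - f k x) < e"
  shows "\<exists>G\<in>L2 M. (\<lambda>k. sq_norm (\<lambda>x. f k x - G x)) \<longlonglongrightarrow> 0"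
proof -
  have "\<forall>i. \<exists>N. \<forall>j\<ge>N. \<forall>k\<ge>N. sq_norm (\<lambda>x. f j x - f k x) < (1/4)^i"
    using Cauchy by simp
  then obtain N where N: "\<And>i j k. j \<ge> N i \<Longrightarrow> k \<ge> N i \<Longrightarrow> sq_norm (\<lambda>x. f j x - f k x) < (1/4)^i"
    by metis
  define n where "n i = Max (N ` {..i}) + i" for i
  have N_le_n: "N i \<le> n i" for i
    unfolding n_def by (simp add: trans_le_add1)
  have n_mono: "n i \<le> n k" if "i \<le> k" for i k
    unfolding n_def using that by (intro add_mono Max_mono) auto
  have "sq_norm (\<lambda>x. f (n k) x - f (n i) x) \<le> (1/4)^i" if "i \<le> k" for i k
  proof -
    have "N i \<le> n k"
      using N_le_n[of i] n_mono[OF that] by (rule order_trans)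
    then show ?thesis
      using N[of i "n k" "n i"] N_le_n[of i] by simp
  qed
  with f obtain G where G: "G \<in> L2 M" and close: "\<And>i. sq_norm (\<lambda>x. G x - f (n i) x) \<le> (1/4)^i"
    using L2_limit_fast_Cauchy[of "\<lambda>i. f (n i)"] by blast
  have "\<exists>K. \<forall>k\<ge>K. sq_norm (\<lambda>x. f k x - G x) < e" if "e > 0" for e
  proof -
    obtain i where i: "(1/4::real)^i < e/4"
      using real_arch_pow_inv[of "e/4" "1/4"] \<open>e > 0\<close> by auto
    have "sq_norm (\<lambda>x. f k x - G x) < e" if "n i \<le> k" for k
    proof -
      have "sq_norm (\<lambda>x. f k x - G x)
          \<le> 2 * sq_norm (\<lambda>x. f k x - f (n i) x) + 2 * sq_norm (\<lambda>x. f (n i) x - G x)"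
        using f G by (intro sq_norm_diff_le)
      also have "\<dots> < 2 * (1/4)^i + 2 * (1/4)^i"
        using N[of i k "n i"] N_le_n[of i] that close[of i] by (simp add: sq_norm_diff_commute)
      finally show ?thesis using i by simp
    qed
    then show ?thesis by blast
  qed
  then show ?thesis
    using G by (intro bexI[OF _ G] LIMSEQ_I) auto
qed

lemma l2_inner_self: "l2_inner f f = sq_norm f"
  by (simp add: l2_inner_def sq_norm_def power2_eq_square)

lemma l2_inner_tendsto:
  assumes f: "\<And>k. f k \<in> L2 M" and G: "G \<in> L2 M" and h: "h \<in> L2 M"
    and lim: "(\<lambda>k. sq_norm (\<lambda>x. f k x - G x)) \<longlonglongrightarrow> 0"
  shows "(\<lambda>k. l2_inner (f k) h) \<longlonglongrightarrow> l2_inner G h"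
proof (rule LIM_zero_cancel, rule Lim_null_comparison)
  have "\<bar>l2_inner (f k) h - l2_inner G h\<bar> \<le> sqrt (sq_norm (\<lambda>x. f k x - G x) * sq_norm h)" for k
  proof (rule real_le_rsqrt)
    have "l2_inner (f k) h - l2_inner G h = l2_inner (\<lambda>x. f k x - G x) h"
      using l2_inner_lincomb[OF f[of k] G h, of 1 "-1"] by simp
    also have "(\<dots>)\<^sup>2 \<le> sq_norm (\<lambda>x. f k x - G x) * sq_norm h"
      using f G h by (simp add: l2_inner_sq_le L2_diff)
    finally show "\<bar>l2_inner (f k) h - l2_inner G h\<bar>\<^sup>2 \<le> sq_norm (\<lambda>x. f k x - G x) * sq_norm h"
      by simp
  qed
  then show "\<forall>\<^sub>F k in sequentially. norm (l2_inner (f k) h - l2_inner G h)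
      \<le> sqrt (sq_norm (\<lambda>x. f k x - G x) * sq_norm h)"
    by simp
  show "(\<lambda>k. sqrt (sq_norm (\<lambda>x. f k x - G x) * sq_norm h)) \<longlonglongrightarrow> 0"
    using tendsto_real_sqrt[OF tendsto_mult_right[OF lim, of "sq_norm h"]] by simp
qed

lemma integrable_tail:
  assumes "f \<in> L2 M" "0 \<le> R"
  shows "integrable M (\<lambda>x. (max (\<bar>f x\<bar> - R) 0)\<^sup>2)"
proof (rule Bochner_Integration.integrable_bound)
  show "integrable M (\<lambda>x. (f x)\<^sup>2)"
    using assms(1) by (rule integrable_sq_L2)
  show "AE x in M. norm ((max (\<bar>f x\<bar> - R) 0)\<^sup>2) \<le> norm ((f x)\<^sup>2)"
    using assms(2) by (intro AE_I2) (auto simp: abs_le_square_iff[symmetric] max_def)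
qed (use L2_borel_measurable[OF assms(1)] in measurable)

lemma tail_integral_le_sq_norm:
  assumes "f \<in> L2 M" "0 \<le> R"
  shows "(\<integral>x. (max (\<bar>f x\<bar> - R) 0)\<^sup>2 \<partial>M) \<le> sq_norm f"
  unfolding sq_norm_def using assms
  by (intro integral_mono integrable_tail integrable_sq_L2)
    (auto simp: abs_le_square_iff[symmetric] max_def)

end

section \<open>Contractions with an adjoint\<close>

definition tail_sup :: "'a measure \<Rightarrow> (('a \<Rightarrow> real) \<Rightarrow> 'a \<Rightarrow> real) \<Rightarrow> real \<Rightarrow> real"
  where "tail_sup M P R = (SUP f\<in>unit_ball_L2 M. \<integral>x. (max (\<bar>P f x\<bar> - R) 0)\<^sup>2 \<partial>M)"

lemma tail_norm_eq_Lim_tail_sup: "tail_norm M P = Lim at_top (tail_sup M P)"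
  by (simp add: tail_norm_def tail_sup_def[abs_def])

locale L2_contraction = prob_space +
  fixes P Q :: "('a \<Rightarrow> real) \<Rightarrow> 'a \<Rightarrow> real"
  assumes operator: "L2_operator M P"
    and contraction: "\<And>f. f \<in> L2 M \<Longrightarrow> (\<integral>x. (P f x)\<^sup>2 \<partial>M) \<le> (\<integral>x. (f x)\<^sup>2 \<partial>M)"
    and adjoint: "is_adjoint M P Q"
begin

lemma L2_P: "f \<in> L2 M \<Longrightarrow> P f \<in> L2 M"
  using operator by (simp add: L2_operator_def)

lemma L2_Q: "f \<in> L2 M \<Longrightarrow> Q f \<in> L2 M"
  using adjoint by (simp add: is_adjoint_def L2_operator_def)

lemma P_lincomb_AE:
  "f \<in> L2 M \<Longrightarrow> g \<in> L2 M \<Longrightarrow> AE x in M. P (\<lambda>y. a * f y + b * g y) x = a * P f x + b * P g x"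
  using operator by (simp add: L2_operator_def)

lemma sq_norm_P_le: "f \<in> L2 M \<Longrightarrow> sq_norm (P f) \<le> sq_norm f"
  using contraction by (simp add: sq_norm_def)

lemma l2_inner_P_Q: "f \<in> L2 M \<Longrightarrow> g \<in> L2 M \<Longrightarrow> l2_inner (P f) g = l2_inner f (Q g)"
  using adjoint by (simp add: is_adjoint_def l2_inner_def)

lemma sq_norm_P_lincomb:
  assumes "f \<in> L2 M" "g \<in> L2 M"
  shows "sq_norm (P (\<lambda>y. a * f y + b * g y)) = sq_norm (\<lambda>x. a * P f x + b * P g x)"
proof -
  have [measurable]: "P f \<in> borel_measurable M" "P g \<in> borel_measurable M"
    "P (\<lambda>y. a * f y + b * g y) \<in> borel_measurable M"
    using assms by (simp_all add: L2_borel_measurable L2_P L2_lincomb)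
  show ?thesis
    unfolding sq_norm_def using P_lincomb_AE[OF assms, of a b] by (intro integral_cong_AE) auto
qed

definition dirichlet :: "('a \<Rightarrow> real) \<Rightarrow> real"
  where "dirichlet f = sq_norm f - sq_norm (P f)"

definition dirichlet_form :: "('a \<Rightarrow> real) \<Rightarrow> ('a \<Rightarrow> real) \<Rightarrow> real"
  where "dirichlet_form f g = l2_inner f g - l2_inner (P f) (P g)"

lemma dirichlet_nonneg: "f \<in> L2 M \<Longrightarrow> 0 \<le> dirichlet f"
  using sq_norm_P_le by (simp add: dirichlet_def)

lemma dirichlet_le_sq_norm: "dirichlet f \<le> sq_norm f"
  by (simp add: dirichlet_def)

lemma dirichlet_lincomb:
  assumes "f \<in> L2 M" "g \<in> L2 M"
  shows "dirichlet (\<lambda>x. a * f x + b * g x) = a\<^sup>2 * dirichlet f + 2*a*b * dirichlet_form f g + b\<^sup>2 * dirichlet g"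
  using sq_norm_lincomb[OF assms] sq_norm_lincomb[OF L2_P[OF assms(1)] L2_P[OF assms(2)]]
    sq_norm_P_lincomb[OF assms]
  by (simp add: dirichlet_def dirichlet_form_def algebra_simps)

lemma dirichlet_scale: "f \<in> L2 M \<Longrightarrow> dirichlet (\<lambda>x. a * f x) = a\<^sup>2 * dirichlet f"
  using dirichlet_lincomb[of f f a 0] by simp

lemma dirichlet_form_sq_le:
  assumes "f \<in> L2 M" "g \<in> L2 M"
  shows "(dirichlet_form f g)\<^sup>2 \<le> dirichlet f * dirichlet g"
proof (rule quadratic_nonneg_imp_Cauchy_Schwarz)
  fix s
  have "dirichlet (\<lambda>x. 1 * f x + s * g x) = dirichlet f + 2 * s * dirichlet_form f g + s\<^sup>2 * dirichlet g"
    using dirichlet_lincomb[OF assms, of 1 s] by simp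
  then show "0 \<le> dirichlet f + 2 * s * dirichlet_form f g + s\<^sup>2 * dirichlet g"
    by (metis dirichlet_nonneg L2_lincomb assms)
qed

lemma dirichlet_add_le:
  assumes "f \<in> L2 M" "g \<in> L2 M"
  shows "dirichlet (\<lambda>x. f x + g x) \<le> 2 * dirichlet f + 2 * dirichlet g"
  using dirichlet_lincomb[OF assms, of 1 1] dirichlet_lincomb[OF assms, of 1 "-1"]
    dirichlet_nonneg[OF L2_diff[OF assms]]
  by simp

lemma dirichlet_midpoint_le:
  assumes "f \<in> L2 M" "g \<in> L2 M"
  shows "dirichlet (\<lambda>x. 1/2 * f x + 1/2 * g x) \<le> (dirichlet f + dirichlet g) / 2"
  using dirichlet_lincomb[OF assms, of "1/2" "1/2"] dirichlet_lincomb[OF assms, of "1/2" "-1/2"]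
    dirichlet_nonneg[OF L2_lincomb[OF assms, of "1/2" "-1/2"]]
  by (simp add: power2_eq_square)

lemma fixed_point_of_dirichlet_eq_0:
  assumes G: "G \<in> L2 M" and dirichlet: "dirichlet G = 0"
  shows "AE x in M. G x - Q (P G) x = 0"
proof -
  define u where "u x = G x - Q (P G) x" for x
  have QPG: "Q (P G) \<in> L2 M"
    using G by (intro L2_Q L2_P)
  have u: "u \<in> L2 M"
    unfolding u_def using G QPG by (rule L2_diff)
  have "dirichlet_form G u = l2_inner G u - l2_inner (Q (P G)) u"
    using l2_inner_P_Q[OF u L2_P[OF G]] by (simp add: dirichlet_form_def l2_inner_commute)
  also have "\<dots> = sq_norm u"
    using l2_inner_lincomb[OF G QPG u, of 1 "-1"] by (simp add: u_def[symmetric] l2_inner_self)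
  finally have "(sq_norm u)\<^sup>2 \<le> dirichlet G * dirichlet u"
    using dirichlet_form_sq_le[OF G u] by simp
  then have "sq_norm u = 0"
    using dirichlet by simp
  then show ?thesis
    using sq_norm_eq_0_AE[OF u] by (simp add: u_def)
qed

lemma dirichlet_eq_0_of_limit:
  assumes f: "\<And>k. f k \<in> L2 M" and G: "G \<in> L2 M"
    and lim: "(\<lambda>k. sq_norm (\<lambda>x. f k x - G x)) \<longlonglongrightarrow> 0"
    and dirichlet_lim: "(\<lambda>k. dirichlet (f k)) \<longlonglongrightarrow> 0"
  shows "dirichlet G = 0"
proof (rule antisym)
  have bound: "dirichlet G \<le> 2 * dirichlet (f k) + 2 * sq_norm (\<lambda>x. f k x - G x)" for k
  proof -
    have "dirichlet G = dirichlet (\<lambda>x. f k x + (G x - f k x))"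
      by simp
    also have "\<dots> \<le> 2 * dirichlet (f k) + 2 * dirichlet (\<lambda>x. G x - f k x)"
      using f G by (intro dirichlet_add_le L2_diff)
    also have "\<dots> \<le> 2 * dirichlet (f k) + 2 * sq_norm (\<lambda>x. f k x - G x)"
      using dirichlet_le_sq_norm[of "\<lambda>x. G x - f k x"] by (simp add: sq_norm_diff_commute)
    finally show ?thesis .
  qed
  have "(\<lambda>k. 2 * dirichlet (f k) + 2 * sq_norm (\<lambda>x. f k x - G x)) \<longlonglongrightarrow> 2 * 0 + 2 * 0"
    by (intro tendsto_intros dirichlet_lim lim)
  from tendsto_lowerbound[OF this always_eventually[OF allI[OF bound]]]
  show "dirichlet G \<le> 0"
    by simp
  show "0 \<le> dirichlet G"
    using G by (rule dirichlet_nonneg)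
qed

definition feasible :: "('a \<Rightarrow> real) \<Rightarrow> real \<Rightarrow> ('a \<Rightarrow> real) set"
  where "feasible h e = {f \<in> L2 M. 1 \<le> l2_inner f h \<and> dirichlet f \<le> e}"

lemma feasible_mono: "e \<le> e' \<Longrightarrow> feasible h e \<subseteq> feasible h e'"
  by (auto simp: feasible_def)

lemma midpoint_feasible:
  assumes h: "h \<in> L2 M" and "f \<in> feasible h e" "g \<in> feasible h e"
  shows "(\<lambda>x. 1/2 * f x + 1/2 * g x) \<in> feasible h e"
proof -
  have f: "f \<in> L2 M" and g: "g \<in> L2 M"
    using assms by (simp_all add: feasible_def)
  show ?thesis
    using assms L2_lincomb[OF f g, of "1/2" "1/2"] l2_inner_lincomb[OF f g h, of "1/2" "1/2"]
      dirichlet_midpoint_le[OF f g] by (simp add: feasible_def)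
qed

text \<open>Near-minimisers of the norm over the nested convex sets \<open>feasible h (1 / Suc k)\<close> are
  Cauchy by the parallelogram law, since midpoints stay feasible.\<close>

lemma exists_Cauchy_feasible:
  assumes h: "h \<in> L2 M" and bounded: "\<And>e. 0 < e \<Longrightarrow> \<exists>f\<in>feasible h e. sq_norm f \<le> C"
  shows "\<exists>f. (\<forall>k. f k \<in> feasible h (1 / Suc k))
    \<and> (\<forall>e>0. \<exists>N. \<forall>j\<ge>N. \<forall>k\<ge>N. sq_norm (\<lambda>x. f j x - f k x) < e)"
proof -
  define eps :: "nat \<Rightarrow> real" where "eps k = 1 / Suc k" for k
  have eps_pos: "0 < eps k" for k
    by (simp add: eps_def)
  have eps_antimono: "eps k \<le> eps j" if "j \<le> k" for j k
    using that by (simp add: eps_def frac_le)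
  have eps_lim: "eps \<longlonglongrightarrow> 0"
    unfolding eps_def by (rule LIMSEQ_Suc[OF lim_const_over_n])
  have ne: "feasible h (eps k) \<noteq> {}" for k
    using bounded[OF eps_pos[of k]] by auto
  have bdd: "bdd_below (sq_norm ` feasible h e)" for e
    by (intro bdd_belowI[of _ 0]) auto
  define m where "m k = Inf (sq_norm ` feasible h (eps k))" for k
  have m_le: "m k \<le> sq_norm f" if "f \<in> feasible h (eps k)" for f k
    unfolding m_def using bdd that by (intro cInf_lower) auto
  have "incseq m"
    unfolding incseq_def m_def using ne bdd eps_antimono
    by (auto intro!: cInf_superset_mono image_mono feasible_mono)
  moreover have "m k \<le> C" for k
    using bounded[OF eps_pos[of k]] m_le by (meson order_trans)
  ultimately obtain L where L: "m \<longlonglongrightarrow> L" and m_le_L: "\<And>k. m k \<le> L"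
    using incseq_convergent by metis
  have "\<exists>f. f \<in> feasible h (eps k) \<and> sq_norm f < m k + eps k" for k
  proof -
    have "Inf (sq_norm ` feasible h (eps k)) < m k + eps k"
      using eps_pos[of k] by (simp add: m_def)
    then show ?thesis
      using cInf_less_iff[OF _ bdd] ne by auto
  qed
  then obtain f where f_feasible: "\<And>k. f k \<in> feasible h (eps k)"
    and f_near: "\<And>k. sq_norm (f k) < m k + eps k"
    by metis
  have f: "f k \<in> L2 M" for k
    using f_feasible by (simp add: feasible_def)
  have close: "sq_norm (\<lambda>x. f j x - f k x) \<le> 2 * (L - m j) + 4 * eps j" if "j \<le> k" for j k
  proof -
    have "f k \<in> feasible h (eps j)"
      using f_feasible feasible_mono[OF eps_antimono[OF that]] by blast
    then have "m j \<le> sq_norm (\<lambda>x. 1/2 * f j x + 1/2 * f k x)"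
      using f_feasible by (intro m_le midpoint_feasible h)
    then show ?thesis
      using sq_norm_diff_parallelogram[OF f f, of j k] f_near[of j] f_near[of k] m_le_L[of k]
        eps_antimono[OF that] by simp
  qed
  have "(\<lambda>j. 2 * (L - m j) + 4 * eps j) \<longlonglongrightarrow> 2 * (L - L) + 4 * 0"
    by (intro tendsto_intros L eps_lim)
  then have "\<forall>e>0. \<exists>N. \<forall>j\<ge>N. \<forall>k\<ge>N. sq_norm (\<lambda>x. f j x - f k x) < e"
    using Cauchy_of_null_bound[where d="\<lambda>j k. sq_norm (\<lambda>x. f j x - f k x)", OF close sq_norm_diff_commute]
    by simp
  with f_feasible show ?thesis
    unfolding eps_def by blast
qed

lemma exists_dirichlet_eq_0:
  assumes h: "h \<in> L2 M" and bounded: "\<And>e. 0 < e \<Longrightarrow> \<exists>f\<in>feasible h e. sq_norm f \<le> C"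
  shows "\<exists>G\<in>L2 M. 1 \<le> l2_inner G h \<and> dirichlet G = 0"
proof -
  obtain f where f_feasible: "\<And>k. f k \<in> feasible h (1 / Suc k)"
    and Cauchy: "\<And>e. 0 < e \<Longrightarrow> \<exists>N. \<forall>j\<ge>N. \<forall>k\<ge>N. sq_norm (\<lambda>x. f j x - f k x) < e"
    using exists_Cauchy_feasible[OF h bounded] by blast
  have f: "f k \<in> L2 M" for k
    using f_feasible by (simp add: feasible_def)
  obtain G where G: "G \<in> L2 M" and G_lim: "(\<lambda>k. sq_norm (\<lambda>x. f k x - G x)) \<longlonglongrightarrow> 0"
    using L2_complete[of f, OF f Cauchy] by blast
  have "1 \<le> l2_inner G h"
    using f_feasible by (intro tendsto_lowerbound[OF l2_inner_tendsto[OF f G h G_lim]] always_eventually)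
      (auto simp: feasible_def)
  moreover have "dirichlet G = 0"
  proof (rule dirichlet_eq_0_of_limit[OF f G G_lim], rule tendsto_sandwich)
    show "\<forall>\<^sub>F k in sequentially. 0 \<le> dirichlet (f k)"
      "\<forall>\<^sub>F k in sequentially. dirichlet (f k) \<le> 1 / Suc k"
      using f f_feasible by (auto simp: feasible_def dirichlet_nonneg intro!: always_eventually)
  qed (use LIMSEQ_Suc[OF lim_const_over_n[of 1]] in simp_all)
  ultimately show ?thesis
    using G by blast
qed

lemma unit_ball_L2_iff: "f \<in> unit_ball_L2 M \<longleftrightarrow> f \<in> L2 M \<and> sq_norm f \<le> 1"
  by (simp add: unit_ball_L2_def sq_norm_def)

lemma zero_in_unit_ball_L2: "(\<lambda>_. 0) \<in> unit_ball_L2 M"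
  by (simp add: unit_ball_L2_iff L2_const sq_norm_def)

lemma sq_norm_P_le_1: "f \<in> unit_ball_L2 M \<Longrightarrow> sq_norm (P f) \<le> 1"
  using sq_norm_P_le[of f] by (simp add: unit_ball_L2_iff)

lemma tail_sup_upper:
  assumes "f \<in> unit_ball_L2 M" "0 \<le> R"
  shows "(\<integral>x. (max (\<bar>P f x\<bar> - R) 0)\<^sup>2 \<partial>M) \<le> tail_sup M P R"
  unfolding tail_sup_def
proof (rule cSUP_upper[OF assms(1)], rule bdd_aboveI)
  fix y assume "y \<in> (\<lambda>f. \<integral>x. (max (\<bar>P f x\<bar> - R) 0)\<^sup>2 \<partial>M) ` unit_ball_L2 M"
  then obtain g where g: "g \<in> unit_ball_L2 M" and y: "y = (\<integral>x. (max (\<bar>P g x\<bar> - R) 0)\<^sup>2 \<partial>M)"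
    by blast
  have "g \<in> L2 M"
    using g by (simp add: unit_ball_L2_iff)
  then show "y \<le> 1"
    using tail_integral_le_sq_norm[OF L2_P assms(2)] sq_norm_P_le_1[OF g] y by fastforce
qed

lemma tail_sup_least:
  "(\<And>f. f \<in> unit_ball_L2 M \<Longrightarrow> (\<integral>x. (max (\<bar>P f x\<bar> - R) 0)\<^sup>2 \<partial>M) \<le> c) \<Longrightarrow> tail_sup M P R \<le> c"
  unfolding tail_sup_def using zero_in_unit_ball_L2 by (intro cSUP_least) auto

lemma tail_sup_nonneg:
  assumes "0 \<le> R"
  shows "0 \<le> tail_sup M P R"
proof -
  have "0 \<le> (\<integral>x. (max (\<bar>P (\<lambda>_. 0) x\<bar> - R) 0)\<^sup>2 \<partial>M)"
    by (rule integral_nonneg_AE) simp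
  then show ?thesis
    using tail_sup_upper[OF zero_in_unit_ball_L2 assms] by linarith
qed

lemma tail_sup_antimono:
  assumes "0 \<le> R" "R \<le> R'"
  shows "tail_sup M P R' \<le> tail_sup M P R"
proof (rule tail_sup_least)
  fix f assume f: "f \<in> unit_ball_L2 M"
  have Pf: "P f \<in> L2 M"
    using f by (simp add: unit_ball_L2_iff L2_P)
  have "(max (\<bar>P f x\<bar> - R') 0)\<^sup>2 \<le> (max (\<bar>P f x\<bar> - R) 0)\<^sup>2" for x
    using assms(2) by (intro power_mono) auto
  then have "(\<integral>x. (max (\<bar>P f x\<bar> - R') 0)\<^sup>2 \<partial>M) \<le> (\<integral>x. (max (\<bar>P f x\<bar> - R) 0)\<^sup>2 \<partial>M)"
    using assms integrable_tail[OF Pf] by (intro integral_mono) auto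
  also have "\<dots> \<le> tail_sup M P R"
    using f assms(1) by (rule tail_sup_upper)
  finally show "(\<integral>x. (max (\<bar>P f x\<bar> - R') 0)\<^sup>2 \<partial>M) \<le> tail_sup M P R" .
qed

lemma tail_norm_eq_Inf: "tail_norm M P = Inf (tail_sup M P ` {0..})"
  unfolding tail_norm_eq_Lim_tail_sup
  using tail_sup_antimono tail_sup_nonneg
  by (intro tendsto_Lim trivial_limit_at_top_linorder antimono_tendsto_Inf bdd_belowI[of _ 0]) auto

lemma op_norm2_eq_SUP: "op_norm2 M P = (SUP f\<in>unit_ball_L2 M. sqrt (sq_norm (P f)))"
  by (simp add: op_norm2_def sq_norm_def)

lemma bdd_above_sqrt_sq_norm_P: "bdd_above ((\<lambda>f. sqrt (sq_norm (P f))) ` unit_ball_L2 M)"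
proof (rule bdd_aboveI[of _ 1])
  fix y assume "y \<in> (\<lambda>f. sqrt (sq_norm (P f))) ` unit_ball_L2 M"
  then show "y \<le> 1"
    using sq_norm_P_le_1 by auto
qed

lemma sqrt_sq_norm_P_le_op_norm2:
  "f \<in> unit_ball_L2 M \<Longrightarrow> sqrt (sq_norm (P f)) \<le> op_norm2 M P"
  unfolding op_norm2_eq_SUP by (rule cSUP_upper[OF _ bdd_above_sqrt_sq_norm_P])

lemma op_norm2_nonneg: "0 \<le> op_norm2 M P"
  using real_sqrt_ge_zero[OF sq_norm_nonneg[of "P (\<lambda>_. 0)"]]
    sqrt_sq_norm_P_le_op_norm2[OF zero_in_unit_ball_L2] by linarith

lemma tail_norm_le_op_norm2_sq: "tail_norm M P \<le> (op_norm2 M P)\<^sup>2"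
proof -
  have "tail_norm M P \<le> tail_sup M P 0"
    unfolding tail_norm_eq_Inf using tail_sup_nonneg by (intro cInf_lower bdd_belowI[of _ 0]) auto
  also have "\<dots> \<le> (op_norm2 M P)\<^sup>2"
  proof (rule tail_sup_least)
    fix f assume f: "f \<in> unit_ball_L2 M"
    have "(\<integral>x. (max (\<bar>P f x\<bar> - 0) 0)\<^sup>2 \<partial>M) \<le> sq_norm (P f)"
      using f by (intro tail_integral_le_sq_norm L2_P) (auto simp: unit_ball_L2_iff)
    also have "\<dots> = (sqrt (sq_norm (P f)))\<^sup>2"
      by simp
    also have "\<dots> \<le> (op_norm2 M P)\<^sup>2"
      using f by (intro power_mono sqrt_sq_norm_P_le_op_norm2) simp_all
    finally show "(\<integral>x. (max (\<bar>P f x\<bar> - 0) 0)\<^sup>2 \<partial>M) \<le> (op_norm2 M P)\<^sup>2" .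
  qed
  finally show ?thesis .
qed

lemma exists_sq_norm_P_gt:
  assumes "1 \<le> op_norm2 M P" "0 < \<eta>"
  shows "\<exists>f\<in>unit_ball_L2 M. 1 - \<eta> < sq_norm (P f)"
proof -
  have "sqrt (max 0 (1 - \<eta>)) < sqrt 1"
    using assms(2) by (subst real_sqrt_less_iff) simp
  then have "sqrt (max 0 (1 - \<eta>)) < op_norm2 M P"
    using assms(1) real_sqrt_one by linarith
  then obtain f where "f \<in> unit_ball_L2 M" "sqrt (max 0 (1 - \<eta>)) < sqrt (sq_norm (P f))"
    unfolding op_norm2_eq_SUP using zero_in_unit_ball_L2
    by (subst (asm) less_cSUP_iff[OF _ bdd_above_sqrt_sq_norm_P]) auto
  then show ?thesis
    by (auto simp: real_sqrt_less_iff)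
qed

end

section \<open>Positive contractions\<close>

locale positive_L2_contraction = L2_contraction +
  assumes positive: "\<And>f. f \<in> L2 M \<Longrightarrow> AE x in M. 0 \<le> f x \<Longrightarrow> AE x in M. 0 \<le> P f x"
begin

lemma sq_norm_P_le_P_abs:
  assumes f: "f \<in> L2 M"
  shows "sq_norm (P f) \<le> sq_norm (P (\<lambda>x. \<bar>f x\<bar>))"
proof -
  define g where "g x = \<bar>f x\<bar>" for x
  have g: "g \<in> L2 M"
    unfolding g_def using f by (rule L2_abs)
  have "AE x in M. 0 \<le> P (\<lambda>y. 1 * g y + (-1) * f y) x"
    by (rule positive[OF L2_lincomb[OF g f]]) (simp add: g_def)
  moreover have "AE x in M. 0 \<le> P (\<lambda>y. 1 * g y + 1 * f y) x"
    by (rule positive[OF L2_lincomb[OF g f]]) (simp add: g_def)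
  ultimately have "AE x in M. (P f x)\<^sup>2 \<le> (P g x)\<^sup>2"
    using P_lincomb_AE[OF g f, of 1 "-1"] P_lincomb_AE[OF g f, of 1 1]
  proof eventually_elim
    case (elim x)
    then have "\<bar>P f x\<bar> \<le> \<bar>P g x\<bar>"
      by linarith
    then show ?case
      by (simp only: abs_le_square_iff)
  qed
  then show ?thesis
    unfolding sq_norm_def g_def[symmetric] using f g
    by (intro integral_mono_AE integrable_sq_L2 L2_P)
qed

lemma sq_norm_P_le_mean_plus_tail:
  assumes g: "g \<in> L2 M" and g_nonneg: "AE x in M. 0 \<le> g x" and R: "0 \<le> R"
  shows "sq_norm (P g) \<le> 2 * R * l2_inner g (Q (\<lambda>_. 1)) + (\<integral>x. (max (\<bar>P g x\<bar> - R) 0)\<^sup>2 \<partial>M)"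
proof -
  have Pg: "P g \<in> L2 M"
    using g by (rule L2_P)
  then have [measurable]: "P g \<in> borel_measurable M"
    by (rule L2_borel_measurable)
  have int_abs: "integrable M (\<lambda>x. \<bar>P g x\<bar>)"
    using Pg by (intro integrable_L2 L2_abs)
  have mean: "(\<integral>x. \<bar>P g x\<bar> \<partial>M) = l2_inner g (Q (\<lambda>_. 1))"
  proof -
    have "(\<integral>x. \<bar>P g x\<bar> \<partial>M) = l2_inner (P g) (\<lambda>_. 1)"
      unfolding l2_inner_def using positive[OF g g_nonneg] by (intro integral_cong_AE) auto
    also have "\<dots> = l2_inner g (Q (\<lambda>_. 1))"
      using g L2_const by (rule l2_inner_P_Q)
    finally show ?thesis .
  qed
  have "sq_norm (P g) \<le> (\<integral>x. 2 * R * \<bar>P g x\<bar> + (max (\<bar>P g x\<bar> - R) 0)\<^sup>2 \<partial>M)"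
    unfolding sq_norm_def using Pg R int_abs
    by (intro integral_mono integrable_sq_L2 Bochner_Integration.integrable_add integrable_mult_right
        integrable_tail sq_le_linear_plus_tail)
  also have "\<dots> = 2 * R * (\<integral>x. \<bar>P g x\<bar> \<partial>M) + (\<integral>x. (max (\<bar>P g x\<bar> - R) 0)\<^sup>2 \<partial>M)"
    using int_abs integrable_tail[OF Pg R] by simp
  finally show ?thesis
    unfolding mean .
qed

lemma exists_unit_with_large_mean:
  assumes R: "0 < R"
    and tail: "\<And>f. f \<in> unit_ball_L2 M \<Longrightarrow> (\<integral>x. (max (\<bar>P f x\<bar> - R) 0)\<^sup>2 \<partial>M) \<le> t"
    and near_1: "\<And>\<eta>. 0 < \<eta> \<Longrightarrow> \<exists>f\<in>unit_ball_L2 M. 1 - \<eta> < sq_norm (P f)"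
    and \<eta>: "0 < \<eta>" "\<eta> \<le> (1 - t) / 2"
  shows "\<exists>g\<in>unit_ball_L2 M. (1 - t) / (4 * R) < l2_inner g (Q (\<lambda>_. 1)) \<and> dirichlet g < \<eta>"
proof -
  obtain f where f: "f \<in> unit_ball_L2 M" and big: "1 - \<eta> < sq_norm (P f)"
    using near_1[OF \<eta>(1)] by blast
  define g where "g x = \<bar>f x\<bar>" for x
  have g: "g \<in> L2 M" and g_norm: "sq_norm g \<le> 1"
    using f L2_abs by (auto simp: g_def[abs_def] unit_ball_L2_iff sq_norm_def)
  then have g_ball: "g \<in> unit_ball_L2 M"
    by (simp add: unit_ball_L2_iff)
  have big_g: "1 - \<eta> < sq_norm (P g)"
    using big sq_norm_P_le_P_abs[of f] f by (simp add: g_def[abs_def] unit_ball_L2_iff)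
  have "1 - \<eta> < 2 * R * l2_inner g (Q (\<lambda>_. 1)) + t"
    using sq_norm_P_le_mean_plus_tail[OF g _ less_imp_le[OF R]] tail[OF g_ball] big_g
    by (simp add: g_def)
  with \<eta>(2) have "1 - t < 4 * R * l2_inner g (Q (\<lambda>_. 1))"
    by (simp add: field_simps)
  then have "(1 - t) / (4 * R) < l2_inner g (Q (\<lambda>_. 1))"
    using R by (simp add: field_simps)
  moreover have "dirichlet g < \<eta>"
    using big_g g_norm by (simp add: dirichlet_def)
  ultimately show ?thesis
    using g_ball by blast
qed

lemma exists_almost_fixed:
  assumes R: "0 < R" and t: "t < 1"
    and tail: "\<And>f. f \<in> unit_ball_L2 M \<Longrightarrow> (\<integral>x. (max (\<bar>P f x\<bar> - R) 0)\<^sup>2 \<partial>M) \<le> t"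
    and near_1: "\<And>\<eta>. 0 < \<eta> \<Longrightarrow> \<exists>f\<in>unit_ball_L2 M. 1 - \<eta> < sq_norm (P f)"
    and e: "0 < e"
  shows "\<exists>f\<in>feasible (Q (\<lambda>_. 1)) e. sq_norm f \<le> (4 * R / (1 - t))\<^sup>2"
proof -
  define \<delta> where "\<delta> = (1 - t) / (4 * R)"
  have \<delta>: "0 < \<delta>"
    using R t by (simp add: \<delta>_def)
  define \<eta> where "\<eta> = min ((1 - t) / 2) (e * \<delta>\<^sup>2)"
  have "0 < \<eta>"
    using t e \<delta> by (simp add: \<eta>_def)
  moreover have "\<eta> \<le> (1 - t) / 2"
    unfolding \<eta>_def by (rule min.cobounded1)
  ultimately obtain g where g_ball: "g \<in> unit_ball_L2 M" and c: "\<delta> < l2_inner g (Q (\<lambda>_. 1))"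
    and dirichlet_g: "dirichlet g < \<eta>"
    using exists_unit_with_large_mean[OF R tail near_1] unfolding \<delta>_def by blast
  have g: "g \<in> L2 M" and g_norm: "sq_norm g \<le> 1"
    using g_ball by (simp_all add: unit_ball_L2_iff)
  define c where "c = l2_inner g (Q (\<lambda>_. 1))"
  have \<delta>c: "\<delta>\<^sup>2 \<le> c\<^sup>2"
    using \<delta> c by (intro power_mono) (auto simp: c_def)
  define f' where "f' x = 1 / c * g x" for x
  have "f' \<in> L2 M"
    unfolding f'_def using g by (rule L2_scale)
  moreover have "l2_inner f' (Q (\<lambda>_. 1)) = 1"
    using c \<delta> unfolding f'_def l2_inner_scale c_def[symmetric] by simp
  moreover have "dirichlet f' \<le> e"
  proof -
    have "dirichlet f' = dirichlet g / c\<^sup>2"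
      unfolding f'_def using dirichlet_scale[OF g, of "1 / c"] by (simp add: power_divide)
    also have "\<dots> \<le> (e * \<delta>\<^sup>2) / \<delta>\<^sup>2"
      using dirichlet_g e \<delta> \<delta>c dirichlet_nonneg[OF g]
      by (intro frac_le) (auto simp: \<eta>_def)
    finally show ?thesis
      using \<delta> by simp
  qed
  moreover have "sq_norm f' \<le> (4 * R / (1 - t))\<^sup>2"
  proof -
    have "sq_norm f' = sq_norm g / c\<^sup>2"
      unfolding f'_def using sq_norm_scale[of "1 / c" g] by (simp add: power_divide)
    also have "\<dots> \<le> 1 / \<delta>\<^sup>2"
      using g_norm \<delta> \<delta>c by (intro frac_le) auto
    finally show ?thesis
      by (simp add: \<delta>_def power_divide)
  qed
  ultimately show ?thesis
    by (intro bexI[of _ f']) (simp_all add: feasible_def)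
qed

lemma op_norm2_lt_1_if_tail_norm_lt_1:
  assumes kernel: "trivial_kernel_id_minus M (\<lambda>f. Q (P f))" and tail: "tail_norm M P < 1"
  shows "op_norm2 M P < 1"
proof (rule ccontr)
  assume "\<not> op_norm2 M P < 1"
  then have norm_1: "1 \<le> op_norm2 M P"
    by simp
  have "bdd_below (tail_sup M P ` {0..})"
    using tail_sup_nonneg by (intro bdd_belowI[of _ 0]) auto
  then have "\<exists>y\<in>tail_sup M P ` {0..}. y < 1"
    using tail unfolding tail_norm_eq_Inf by (simp add: cInf_less_iff)
  then obtain R0 where R0: "0 \<le> R0" "tail_sup M P R0 < 1"
    by auto
  define R where "R = R0 + 1"
  have R: "0 < R" and tail_R: "tail_sup M P R < 1"
    using tail_sup_antimono[of R0 R] R0 by (auto simp: R_def)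
  have "\<exists>f\<in>feasible (Q (\<lambda>_. 1)) e. sq_norm f \<le> (4 * R / (1 - tail_sup M P R))\<^sup>2"
    if "0 < e" for e
    using R by (intro exists_almost_fixed[OF R tail_R _ exists_sq_norm_P_gt[OF norm_1] that] tail_sup_upper) auto
  then obtain G where G: "G \<in> L2 M" and G_h: "1 \<le> l2_inner G (Q (\<lambda>_. 1))" and "dirichlet G = 0"
    using exists_dirichlet_eq_0[OF L2_Q[OF L2_const]] by blast
  then have "AE x in M. G x - Q (P G) x = 0"
    by (intro fixed_point_of_dirichlet_eq_0)
  with G kernel have "AE x in M. G x = 0"
    by (simp add: trivial_kernel_id_minus_def)
  then have "AE x in M. G x * Q (\<lambda>_. 1) x = 0"
    by eventually_elim simp
  then have "l2_inner G (Q (\<lambda>_. 1)) = 0"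
    unfolding l2_inner_def by (rule integral_eq_zero_AE)
  with G_h show False
    by simp
qed

end

theorem corollary4p2:
  fixes M :: "'a measure" and P Q :: "('a \<Rightarrow> real) \<Rightarrow> ('a \<Rightarrow> real)"
  assumes "prob_space M"
    and "sub_markov M P"
    and "is_adjoint M P Q"
    and "trivial_kernel_id_minus M (\<lambda>f. Q (P f))"
  shows "op_norm2 M P < 1 \<longleftrightarrow> tail_norm M P < 1"
proof -
  interpret positive_L2_contraction M P Q
    using assms(1-3)
    unfolding positive_L2_contraction_def positive_L2_contraction_axioms_def
      L2_contraction_def L2_contraction_axioms_def sub_markov_def
    by auto
  show ?thesis
  proof
    assume "op_norm2 M P < 1"
    then have "(op_norm2 M P)\<^sup>2 < 1"
      using op_norm2_nonneg by (simp add: power_less_one_iff)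
    then show "tail_norm M P < 1"
      using tail_norm_le_op_norm2_sq by linarith
  next
    assume "tail_norm M P < 1"
    with assms(4) show "op_norm2 M P < 1"
      by (rule op_norm2_lt_1_if_tail_norm_lt_1)
  qed
qed

end
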